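(* Let $N\ge1$, $\varphi,\gamma\in(0,1)$ with $\varphi+\gamma\ge1$, $\alpha=\min\{\varphi,\gamma\}$. Suppose the one-step transition probabilities of $(X_t)$ on $\{0,1\}^N$ have the form $$p_{t-1\to t}(\boldsymbol{x},\boldsymbol{y})=\varphi^{\|\boldsymbol{y}\|}\bar\varphi^{N-\|\boldsymbol{y}\|}\Big\{1+\sum_{A\subseteq[N],A\neq\emptyset}\kappa_{t,A}\prod_{k\in A}\Big(1-\frac{\boldsymbol{y}[k]}{\varphi}\Big)\Big(1-\frac{\boldsymbol{x}[k]}{\gamma}\Big)\Big\},\quad \kappa_{t,A}=\Big(\frac{\alpha}{\bar\alpha}\Big)^{|A|}\mathbb{E}\Big[\prod_{k\in A}\Big(1-\frac{Z_t[k]}{\alpha}\Big)\Big],$$ for a random element $Z_t$ of $\{0,1\}^N$ with exchangeable coordinates. Then $\kappa_{t,A}=\tilde\kappa_{t,|A|}$ with $$\tilde\kappa_{t,k}=\Big(\frac{\alpha}{\bar\alpha}\Big)^{k}\mathbb{E}\big[Q_k(\|Z_t\|;N,\alpha)\big],$$ and $$p_{t-1\to t}(\boldsymbol{x},\boldsymbol{y})=\varphi^{\|\boldsymbol{y}\|}\bar\varphi^{N-\|\boldsymbol{y}\|}\Big\{1+\sum_{k=1}^N\binom{N}{k}\tilde\kappa_{t,k}R_k\big(\|\boldsymbol{x}\|,\|\boldsymbol{y}\|,\langle\boldsymbol{x},\boldsymbol{y}\rangle\big)\Big\},$$ where $R_k$ is the coefficient of $\binom{N}{k}s^k$ in $$G_R(\boldsymbol{x},\boldsymbol{y};s)=(1+s)^{N_{00}}\big(1-(\bar\gamma/\gamma)s\big)^{N_{10}}\big(1-(\bar\varphi/\varphi)s\big)^{N_{01}}\big(1+(\bar\varphi\bar\gamma/(\varphi\gamma))s\big)^{N_{11}},$$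 with $N_{ab}=|\{k:\boldsymbol{x}[k]=a,\boldsymbol{y}[k]=b\}|$, so that $N_{00}=N-\|\boldsymbol{x}\|-\|\boldsymbol{y}\|+\langle\boldsymbol{x},\boldsymbol{y}\rangle$, $N_{01}=\|\boldsymbol{y}\|-\langle\boldsymbol{x},\boldsymbol{y}\rangle$, $N_{10}=\|\boldsymbol{x}\|-\langle\boldsymbol{x},\boldsymbol{y}\rangle$, $N_{11}=\langle\boldsymbol{x},\boldsymbol{y}\rangle$.
   Context: $\bar a=1-a$; $[N]=\{1,\dots,N\}$; $\|\boldsymbol{x}\|$ is the number of ones of $\boldsymbol{x}\in\{0,1\}^N$ and $\langle\boldsymbol{x},\boldsymbol{y}\rangle=\sum_k\boldsymbol{x}[k]\boldsymbol{y}[k]$. The Krawtchouk polynomials $Q_n(\zeta;N,a)$, $n=0,\dots,N$, $a\in(0,1)$, are defined by the generating function $\sum_{n=0}^N\binom{N}{n}Q_n(\zeta;N,a)s^n=(1-(\bar a/a)s)^\zeta(1+s)^{N-\zeta}$; they are orthogonal for the Binomial$(N,a)$ distribution with $Q_n(0;N,a)=1$. *)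

theory Defs
  imports "HOL-Probability.Probability" "HOL-Computational_Algebra.Polynomial"
begin

text \<open>Binary vectors x in {0,1}^N are represented as functions nat => nat with
  x k in {0,1} for k in {1..N} and x k = 0 outside {1..N}.\<close>

definition binvec :: "nat \<Rightarrow> (nat \<Rightarrow> nat) \<Rightarrow> bool" where
  "binvec N x \<longleftrightarrow> (\<forall>k. x k \<in> {0,1}) \<and> (\<forall>k. k \<notin> {1..N} \<longrightarrow> x k = 0)"

definition onesv :: "nat \<Rightarrow> (nat \<Rightarrow> nat) \<Rightarrow> nat" where
  "onesv N x = (\<Sum>k\<in>{1..N}. x k)"

definition innerv :: "nat \<Rightarrow> (nat \<Rightarrow> nat) \<Rightarrow> (nat \<Rightarrow> nat) \<Rightarrow> nat" where
  "innerv N x y = (\<Sum>k\<in>{1..N}. x k * y k)"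

text \<open>Krawtchouk polynomial Q_n(zeta;N,a): via the generating function
  sum_n (N choose n) Q_n s^n = (1 - (abar/a) s)^zeta (1+s)^(N-zeta).\<close>
definition krawtchouk :: "nat \<Rightarrow> nat \<Rightarrow> nat \<Rightarrow> real \<Rightarrow> real" where
  "krawtchouk n zeta N a =
     coeff ([:1, -((1 - a) / a):] ^ zeta * [:1, 1:] ^ (N - zeta)) n / real (N choose n)"

text \<open>R_k(|x|,|y|,<x,y>): coefficient of (N choose k) s^k in G_R, with
  N00 = N-u-v+w, N10 = u-w, N01 = v-w, N11 = w.\<close>
definition Rcoef :: "nat \<Rightarrow> real \<Rightarrow> real \<Rightarrow> nat \<Rightarrow> nat \<Rightarrow> nat \<Rightarrow> nat \<Rightarrow> real" where
  "Rcoef N phi gam k u v w =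
     coeff ([:1, 1:] ^ (N + w - u - v)
          * [:1, -((1 - gam) / gam):] ^ (u - w)
          * [:1, -((1 - phi) / phi):] ^ (v - w)
          * [:1, (1 - phi) * (1 - gam) / (phi * gam):] ^ w) k / real (N choose k)"

definition exchangeable_pmf :: "nat \<Rightarrow> (nat \<Rightarrow> nat) pmf \<Rightarrow> bool" where
  "exchangeable_pmf N Z \<longleftrightarrow>
     (\<forall>\<sigma>. \<sigma> permutes {1..N} \<longrightarrow> map_pmf (\<lambda>z. z \<circ> \<sigma>) Z = Z)"

definition kappaA :: "real \<Rightarrow> (nat \<Rightarrow> nat) pmf \<Rightarrow> nat set \<Rightarrow> real" where
  "kappaA \<alpha> Z A = (\<alpha> / (1 - \<alpha>)) ^ card A *
     measure_pmf.expectation Z (\<lambda>z. \<Prod>k\<in>A. (1 - real (z k) / \<alpha>))"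

definition kappat :: "nat \<Rightarrow> real \<Rightarrow> (nat \<Rightarrow> nat) pmf \<Rightarrow> nat \<Rightarrow> real" where
  "kappat N \<alpha> Z k = (\<alpha> / (1 - \<alpha>)) ^ k *
     measure_pmf.expectation Z (\<lambda>z. krawtchouk k (onesv N z) N \<alpha>)"

end

theory Submission
  imports Defs
begin

text \<open>Since Z is exchangeable, E of the product of the 1 - Z[k]/\<alpha> over A depends only on
  n = |A|, hence equals its average over all n-subsets of [N]: the expectation of the n-th
  elementary symmetric polynomial e_n of the 1 - Z[k]/\<alpha>, divided by (N choose n). Now e_n(c)
  is the coefficient of s^n in the product of the 1 + c_k s, and 1 - Z[k]/\<alpha> is
  -(1 - \<alpha>)/\<alpha> at the ones of Z and 1 at its zeros, so that product is the Krawtchouk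
  generating function. Likewise, grouping the subsets A in p by their size produces e_n of
  c_k = (1 - y[k]/\<phi>)(1 - x[k]/\<gamma>); as c_k depends only on (x[k], y[k]), the product of the
  1 + c_k s is G_R.\<close>

lemma prod_monom:
  fixes c :: "'i \<Rightarrow> 'a::comm_semiring_1"
  assumes "finite B"
  shows "(\<Prod>k\<in>B. monom (c k) (d k)) = monom (\<Prod>k\<in>B. c k) (\<Sum>k\<in>B. d k)"
  using assms by (induction B rule: finite_induct) (auto simp: mult_monom)

lemma pCons_1_eq_1_plus_monom: "[:1, c:] = 1 + monom c 1"
  by (rule poly_eqI) (auto simp: coeff_pCons split: nat.split)

lemma coeff_prod_pCons_1:
  fixes c :: "'i \<Rightarrow> 'a::comm_semiring_1"
  assumes "finite S"
  shows "coeff (\<Prod>k\<in>S. [:1, c k:]) n = (\<Sum>B\<in>{B. B \<subseteq> S \<and> card B = n}. \<Prod>k\<in>B. c k)"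
proof -
  have "(\<Prod>k\<in>S. [:1, c k:]) = (\<Sum>B\<in>Pow S. monom (\<Prod>k\<in>B. c k) (card B))"
    unfolding pCons_1_eq_1_plus_monom prod.distrib add.commute[of 1] prod_add[OF assms]
    using assms by (intro sum.cong refl) (simp add: prod_monom finite_subset)
  then have "coeff (\<Prod>k\<in>S. [:1, c k:]) n = (\<Sum>B\<in>Pow S. if card B = n then \<Prod>k\<in>B. c k else 0)"
    by (simp add: coeff_sum)
  also have "\<dots> = (\<Sum>B\<in>{B. B \<subseteq> S \<and> card B = n}. \<Prod>k\<in>B. c k)"
    using assms by (simp add: sum.If_cases) (intro sum.cong; auto)
  finally show ?thesis .
qed

lemma sum_nonempty_subsets_by_card:
  fixes c :: "'i \<Rightarrow> 'a::comm_semiring_1"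
  assumes "finite S"
  shows "(\<Sum>A\<in>{A. A \<subseteq> S \<and> A \<noteq> {}}. w (card A) * (\<Prod>k\<in>A. c k))
       = (\<Sum>n=1..card S. w n * coeff (\<Prod>k\<in>S. [:1, c k:]) n)"
proof -
  let ?\<S> = "{A. A \<subseteq> S \<and> A \<noteq> {}}"
  have "card ` ?\<S> \<subseteq> {1..card S}"
    using assms by (auto intro: card_mono simp: Suc_le_eq card_gt_0_iff finite_subset)
  then have "(\<Sum>A\<in>?\<S>. w (card A) * (\<Prod>k\<in>A. c k))
      = (\<Sum>n=1..card S. \<Sum>A\<in>{A\<in>?\<S>. card A = n}. w (card A) * (\<Prod>k\<in>A. c k))"
    using assms by (intro sum.group[symmetric]) auto
  also have "\<dots> = (\<Sum>n=1..card S. w n * coeff (\<Prod>k\<in>S. [:1, c k:]) n)"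
  proof (intro sum.cong refl)
    fix n :: nat assume "n \<in> {1..card S}"
    then have "{A\<in>?\<S>. card A = n} = {B. B \<subseteq> S \<and> card B = n}" by auto
    then show "(\<Sum>A\<in>{A\<in>?\<S>. card A = n}. w (card A) * (\<Prod>k\<in>A. c k))
        = w n * coeff (\<Prod>k\<in>S. [:1, c k:]) n"
      using assms by (simp add: coeff_prod_pCons_1 sum_distrib_left)
  qed
  finally show ?thesis .
qed

lemma prod_by_fibres:
  fixes f :: "'b \<Rightarrow> 'c::comm_monoid_mult"
  assumes "finite S" "finite T" "g ` S \<subseteq> T"
  shows "(\<Prod>k\<in>S. f (g k)) = (\<Prod>v\<in>T. f v ^ card {k\<in>S. g k = v})"
proof -
  have "(\<Prod>k\<in>S. f (g k)) = (\<Prod>v\<in>T. \<Prod>k\<in>{k\<in>S. g k = v}. f (g k))"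
    using prod.group[OF assms, of "\<lambda>k. f (g k)"] by simp
  also have "\<dots> = (\<Prod>v\<in>T. \<Prod>k\<in>{k\<in>S. g k = v}. f v)"
    by (intro prod.cong refl) simp
  finally show ?thesis by simp
qed

lemma sum_by_fibres:
  fixes f :: "'b \<Rightarrow> 'c::comm_semiring_1"
  assumes "finite S" "finite T" "g ` S \<subseteq> T"
  shows "(\<Sum>k\<in>S. f (g k)) = (\<Sum>v\<in>T. of_nat (card {k\<in>S. g k = v}) * f v)"
proof -
  have "(\<Sum>k\<in>S. f (g k)) = (\<Sum>v\<in>T. \<Sum>k\<in>{k\<in>S. g k = v}. f (g k))"
    using sum.group[OF assms, of "\<lambda>k. f (g k)"] by simp
  also have "\<dots> = (\<Sum>v\<in>T. \<Sum>k\<in>{k\<in>S. g k = v}. f v)"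
    by (intro sum.cong refl) simp
  finally show ?thesis by simp
qed

lemma finite_binvec: "finite {z. binvec N z}"
proof (rule inj_on_finite)
  show "inj_on (\<lambda>z. {k. z k = 1}) {z. binvec N z}"
  proof (rule inj_onI)
    fix z z' assume "z \<in> {z. binvec N z}" "z' \<in> {z. binvec N z}"
      and same_ones: "{k. z k = 1} = {k. z' k = 1}"
    show "z = z'"
    proof
      fix k
      have "z k \<in> {0, 1}" "z' k \<in> {0, 1}"
        using \<open>z \<in> _\<close> \<open>z' \<in> _\<close> by (auto simp: binvec_def)
      moreover have "z k = 1 \<longleftrightarrow> z' k = 1" using same_ones by blast
      ultimately show "z k = z' k" by auto
    qed
  qed
  show "(\<lambda>z. {k. z k = 1}) ` {z. binvec N z} \<subseteq> Pow {1..N}"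
    unfolding binvec_def by force
qed simp

lemma prod_binvec_pairs:
  fixes h :: "nat \<Rightarrow> nat \<Rightarrow> 'a::comm_monoid_mult"
  assumes "binvec N x" "binvec N y"
  shows "(\<Prod>k\<in>{1..N}. h (x k) (y k))
       = h 0 0 ^ (N + innerv N x y - onesv N x - onesv N y) * h 1 0 ^ (onesv N x - innerv N x y)
         * h 0 1 ^ (onesv N y - innerv N x y) * h 1 1 ^ innerv N x y"
proof -
  define n where "n = (\<lambda>a b. card {k\<in>{1..N}. (x k, y k) = (a, b)})"
  have "x k \<in> {0, 1}" "y k \<in> {0, 1}" for k
    using assms unfolding binvec_def by auto
  then have pairs: "(\<lambda>k. (x k, y k)) ` {1..N} \<subseteq> {0, 1} \<times> {0, 1}"
    by blast
  have prod: "(\<Prod>k\<in>{1..N}. f (x k, y k)) = f (0, 0) ^ n 0 0 * f (0, 1) ^ n 0 1 * f (1, 0) ^ n 1 0 * f (1, 1) ^ n 1 1"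
    for f :: "nat \<times> nat \<Rightarrow> 'a"
    using prod_by_fibres[OF _ _ pairs, of f] by (simp add: n_def mult.assoc)
  have sum: "(\<Sum>k\<in>{1..N}. f (x k, y k)) = n 0 0 * f (0, 0) + n 0 1 * f (0, 1) + n 1 0 * f (1, 0) + n 1 1 * f (1, 1)"
    for f :: "nat \<times> nat \<Rightarrow> nat"
    using sum_by_fibres[OF _ _ pairs, of f] by (simp add: n_def add.assoc)
  have "N = n 0 0 + n 0 1 + n 1 0 + n 1 1" using sum[of "\<lambda>_. 1"] by simp
  moreover have "onesv N x = n 1 0 + n 1 1" using sum[of fst] by (simp add: onesv_def)
  moreover have "onesv N y = n 0 1 + n 1 1" using sum[of snd] by (simp add: onesv_def)
  moreover have "innerv N x y = n 1 1" using sum[of "\<lambda>(a, b). a * b"] by (simp add: innerv_def)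
  ultimately show ?thesis using prod[of "\<lambda>(a, b). h a b"] by (simp add: ac_simps)
qed

lemma innerv_self: "binvec N z \<Longrightarrow> innerv N z z = onesv N z"
  unfolding innerv_def onesv_def binvec_def
  by (intro sum.cong refl) (metis insert_iff singletonD mult_0 mult_1)

lemma prod_binvec:
  fixes f :: "nat \<Rightarrow> 'a::comm_monoid_mult"
  assumes "binvec N z"
  shows "(\<Prod>k\<in>{1..N}. f (z k)) = f 0 ^ (N - onesv N z) * f 1 ^ onesv N z"
  using prod_binvec_pairs[OF assms assms, of "\<lambda>a b. f a"] by (simp add: innerv_self[OF assms])

lemma krawtchouk_binvec:
  assumes "binvec N z" "\<alpha> \<noteq> 0"
  shows "krawtchouk n (onesv N z) N \<alpha>
       = (\<Sum>B\<in>{B. B \<subseteq> {1..N} \<and> card B = n}. \<Prod>k\<in>B. 1 - real (z k) / \<alpha>) / real (N choose n)"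
proof -
  have "(\<Prod>k\<in>{1..N}. [:1, 1 - real (z k) / \<alpha>:])
      = [:1, -((1 - \<alpha>) / \<alpha>):] ^ onesv N z * [:1, 1:] ^ (N - onesv N z)"
    using prod_binvec[OF assms(1), of "\<lambda>a. [:1, 1 - real a / \<alpha>:]"] assms(2)
    by (simp add: diff_divide_distrib mult.commute)
  then show ?thesis
    unfolding krawtchouk_def using coeff_prod_pCons_1[of "{1..N}" "\<lambda>k. 1 - real (z k) / \<alpha>" n]
    by simp
qed

lemma ex_permutes_image_eq:
  assumes "finite S" "A \<subseteq> S" "B \<subseteq> S" "card A = card B"
  shows "\<exists>\<sigma>. \<sigma> permutes S \<and> \<sigma> ` B = A"
proof -
  have fin: "finite A" "finite B" using assms finite_subset by auto
  obtain f where f: "bij_betw f B A" using finite_same_card_bij[OF fin(2,1)] assms(4) by auto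
  have "card (S - B) = card (S - A)" using assms fin by (simp add: card_Diff_subset)
  then obtain g where g: "bij_betw g (S - B) (S - A)"
    using finite_same_card_bij[of "S - B" "S - A"] assms(1) by auto
  define \<sigma> where "\<sigma> = (\<lambda>k. if k \<in> B then f k else if k \<in> S then g k else k)"
  have on_B: "bij_betw \<sigma> B A" using f by (rule bij_betw_cong[THEN iffD1, rotated]) (simp add: \<sigma>_def)
  have "bij_betw \<sigma> (S - B) (S - A)" using g by (rule bij_betw_cong[THEN iffD1, rotated]) (simp add: \<sigma>_def)
  then have "bij_betw \<sigma> (B \<union> (S - B)) (A \<union> (S - A))" by (intro bij_betw_combine[OF on_B]) auto
  moreover have "B \<union> (S - B) = S" "A \<union> (S - A) = S" using assms by auto
  ultimately have "\<sigma> permutes S"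
    by (intro bij_imp_permutes) (auto simp: \<sigma>_def assms(3)[THEN subsetD])
  moreover have "\<sigma> ` B = A" using on_B by (simp add: bij_betw_def)
  ultimately show ?thesis by blast
qed

lemma exchangeable_expectation_prod_eq:
  fixes f :: "nat \<Rightarrow> real"
  assumes "exchangeable_pmf N Z" "A \<subseteq> {1..N}" "B \<subseteq> {1..N}" "card A = card B"
  shows "measure_pmf.expectation Z (\<lambda>z. \<Prod>k\<in>A. f (z k))
       = measure_pmf.expectation Z (\<lambda>z. \<Prod>k\<in>B. f (z k))"
proof -
  obtain \<sigma> where \<sigma>: "\<sigma> permutes {1..N}" "\<sigma> ` B = A"
    using ex_permutes_image_eq[OF _ assms(2-4)] by auto
  have "inj_on \<sigma> B" using permutes_inj[OF \<sigma>(1)] by (auto intro: inj_on_subset)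
  then have "(\<Prod>k\<in>A. f (z k)) = (\<Prod>k\<in>B. f ((z \<circ> \<sigma>) k))" for z
    unfolding \<sigma>(2)[symmetric] by (simp add: prod.reindex)
  then have "measure_pmf.expectation Z (\<lambda>z. \<Prod>k\<in>A. f (z k))
      = measure_pmf.expectation (map_pmf (\<lambda>z. z \<circ> \<sigma>) Z) (\<lambda>z. \<Prod>k\<in>B. f (z k))"
    by simp
  also have "map_pmf (\<lambda>z. z \<circ> \<sigma>) Z = Z"
    using assms(1) \<sigma>(1) unfolding exchangeable_pmf_def by blast
  finally show ?thesis .
qed

lemma kappaA_eq_kappat:
  assumes "\<alpha> \<noteq> 0" "\<forall>z\<in>set_pmf Z. binvec N z" "exchangeable_pmf N Z" "A \<subseteq> {1..N}"
  shows "kappaA \<alpha> Z A = kappat N \<alpha> Z (card A)"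
proof -
  define n where "n = card A"
  define \<B> where "\<B> = {B. B \<subseteq> {1..N} \<and> card B = n}"
  define f where "f = (\<lambda>v::nat. 1 - real v / \<alpha>)"
  have "n \<le> N" unfolding n_def using card_mono[OF _ assms(4)] by simp
  then have card_\<B>: "real (card \<B>) = real (N choose n)" "real (N choose n) \<noteq> 0"
    unfolding \<B>_def using n_subsets[of "{1..N}" n] by simp_all
  have "set_pmf Z \<subseteq> {z. binvec N z}" using assms(2) by blast
  then have "finite (set_pmf Z)" using finite_binvec by (rule finite_subset)
  note integrable = integrable_measure_pmf_finite[OF this]
  have "measure_pmf.expectation Z (\<lambda>z. krawtchouk n (onesv N z) N \<alpha>)
      = measure_pmf.expectation Z (\<lambda>z. (\<Sum>B\<in>\<B>. \<Prod>k\<in>B. f (z k)) / real (N choose n))"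
    using assms(1,2) unfolding \<B>_def f_def
    by (intro integral_cong_AE) (auto intro!: AE_pmfI simp: krawtchouk_binvec)
  also have "\<dots> = (\<Sum>B\<in>\<B>. measure_pmf.expectation Z (\<lambda>z. \<Prod>k\<in>B. f (z k))) / real (N choose n)"
    by (simp add: integral_sum integrable)
  also have "\<dots> = (\<Sum>B\<in>\<B>. measure_pmf.expectation Z (\<lambda>z. \<Prod>k\<in>A. f (z k))) / real (N choose n)"
    using assms(3,4) unfolding \<B>_def n_def
    by (intro arg_cong2[where f="(/)"] sum.cong refl exchangeable_expectation_prod_eq) auto
  also have "\<dots> = measure_pmf.expectation Z (\<lambda>z. \<Prod>k\<in>A. f (z k))"
    using card_\<B> by simp
  finally show ?thesis unfolding kappaA_def kappat_def n_def f_def by simp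
qed

lemma coeff_prod_transition_factors:
  assumes "binvec N x" "binvec N y" "\<phi> \<noteq> 0" "\<gamma> \<noteq> 0" "n \<le> N"
  shows "coeff (\<Prod>k\<in>{1..N}. [:1, (1 - real (y k) / \<phi>) * (1 - real (x k) / \<gamma>):]) n
       = real (N choose n) * Rcoef N \<phi> \<gamma> n (onesv N x) (onesv N y) (innerv N x y)"
proof -
  define h where "h = (\<lambda>a b. [:1, (1 - real b / \<phi>) * (1 - real a / \<gamma>):])"
  have "h 0 0 = [:1, 1:]" "h 1 0 = [:1, -((1 - \<gamma>) / \<gamma>):]" "h 0 1 = [:1, -((1 - \<phi>) / \<phi>):]"
    "h 1 1 = [:1, (1 - \<phi>) * (1 - \<gamma>) / (\<phi> * \<gamma>):]"
    using assms(3,4) by (simp_all add: h_def field_simps)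
  then show ?thesis
    using prod_binvec_pairs[OF assms(1,2), of h] assms(5)
    unfolding Rcoef_def h_def by simp
qed

theorem proposition7:
  fixes N :: nat and \<phi> \<gamma> \<alpha> :: real
    and Z :: "(nat \<Rightarrow> nat) pmf"
    and p :: "(nat \<Rightarrow> nat) \<Rightarrow> (nat \<Rightarrow> nat) \<Rightarrow> real"
  assumes "N \<ge> 1"
    and "0 < \<phi>" "\<phi> < 1" "0 < \<gamma>" "\<gamma> < 1" "\<phi> + \<gamma> \<ge> 1"
    and "\<alpha> = min \<phi> \<gamma>"
    and "\<forall>z\<in>set_pmf Z. binvec N z"
    and "exchangeable_pmf N Z"
    and "\<forall>x y. binvec N x \<longrightarrow> binvec N y \<longrightarrow>
       p x y = \<phi> ^ onesv N y * (1 - \<phi>) ^ (N - onesv N y) *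
         (1 + (\<Sum>A\<in>{A. A \<subseteq> {1..N} \<and> A \<noteq> {}}. kappaA \<alpha> Z A *
            (\<Prod>k\<in>A. (1 - real (y k) / \<phi>) * (1 - real (x k) / \<gamma>))))"
  shows "(\<forall>A. A \<subseteq> {1..N} \<and> A \<noteq> {} \<longrightarrow> kappaA \<alpha> Z A = kappat N \<alpha> Z (card A))
    \<and> (\<forall>x y. binvec N x \<longrightarrow> binvec N y \<longrightarrow>
       p x y = \<phi> ^ onesv N y * (1 - \<phi>) ^ (N - onesv N y) *
         (1 + (\<Sum>k=1..N. real (N choose k) * kappat N \<alpha> Z k *
            Rcoef N \<phi> \<gamma> k (onesv N x) (onesv N y) (innerv N x y))))"
proof -
  have "\<alpha> \<noteq> 0" using assms(2,4,7) by auto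
  then have kappa: "kappaA \<alpha> Z A = kappat N \<alpha> Z (card A)" if "A \<subseteq> {1..N}" for A
    using kappaA_eq_kappat assms(8,9) that by blast
  have "p x y = \<phi> ^ onesv N y * (1 - \<phi>) ^ (N - onesv N y) *
         (1 + (\<Sum>k=1..N. real (N choose k) * kappat N \<alpha> Z k *
            Rcoef N \<phi> \<gamma> k (onesv N x) (onesv N y) (innerv N x y)))"
    if x: "binvec N x" and y: "binvec N y" for x y
  proof -
    let ?c = "\<lambda>k. (1 - real (y k) / \<phi>) * (1 - real (x k) / \<gamma>)"
    have "(\<Sum>A\<in>{A. A \<subseteq> {1..N} \<and> A \<noteq> {}}. kappaA \<alpha> Z A * prod ?c A)
        = (\<Sum>A\<in>{A. A \<subseteq> {1..N} \<and> A \<noteq> {}}. kappat N \<alpha> Z (card A) * prod ?c A)"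
      by (intro sum.cong refl) (simp add: kappa)
    also have "\<dots> = (\<Sum>n=1..N. kappat N \<alpha> Z n * coeff (\<Prod>k\<in>{1..N}. [:1, ?c k:]) n)"
      using sum_nonempty_subsets_by_card[of "{1..N}"] by simp
    also have "\<dots> = (\<Sum>n=1..N. real (N choose n) * kappat N \<alpha> Z n *
            Rcoef N \<phi> \<gamma> n (onesv N x) (onesv N y) (innerv N x y))"
    proof (intro sum.cong refl)
      fix n assume "n \<in> {1..N}"
      then show "kappat N \<alpha> Z n * coeff (\<Prod>k\<in>{1..N}. [:1, ?c k:]) n
          = real (N choose n) * kappat N \<alpha> Z n * Rcoef N \<phi> \<gamma> n (onesv N x) (onesv N y) (innerv N x y)"
        using coeff_prod_transition_factors[OF x y, of \<phi> \<gamma> n] assms(2,4) by simp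
    qed
    finally show ?thesis using assms(10) x y by simp
  qed
  with kappa show ?thesis by blast
qed

end
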